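(* Let $P$ be a finite poset and $X:P\to\mathcal{P}_{<\infty}$ a diagram of finite posets. If $P$ has a maximum element $p$, then $\operatorname{\underline{hocolim}} X$ collapses to $X_p$ (viewed as a subposet of $\operatorname{\underline{hocolim}} X$). In particular, they are weak equivalent.
   Context: $P$ is viewed as a category with a unique arrow $p\to q$ iff $p\le q$; $\mathcal{P}_{<\infty}$ is the category of finite posets and order-preserving maps. Write $X_p=X(p)$, $f_{pq}=X(p\to q)$. $\operatorname{\underline{hocolim}} X$ is the poset on $\coprod_{p}X_p$ keeping the order within each $X_p$ and, for $x\in X_p$, $y\in X_q$, $p\le q$, setting $x\le y$ iff $f_{pq}(x)\le y$ in $X_q$. For $x$ in a finite poset $Y$: $\hat U_x=\{y<x\}$, $\hat F_x=\{y>x\}$. $x$ is an up beat point if $\hat F_x$ has a minimum, a down beat point if $\hat U_x$ has a maximum. A finite poset is contractible if it can be reduced to one point by removing beat points one at a time. $x$ is a down (resp. up) weak point if $\hat U_x$ (resp. $\hat F_x$) is contractible; removing a weak point is an elementary collapse, and $Y$ collapses to $Z$ if $Z$ is obtained from $Y$ by a sequence of elementary collapses. Two finite posets are weak equivalent if their order complexes are homotopy equivalent. *)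

theory Defs
  imports "HOL-Analysis.Analysis"
begin

definition finite_poset :: "'a set \<Rightarrow> ('a \<Rightarrow> 'a \<Rightarrow> bool) \<Rightarrow> bool" where
  "finite_poset A le \<longleftrightarrow> finite A \<and> (\<forall>x\<in>A. le x x)
     \<and> (\<forall>x\<in>A. \<forall>y\<in>A. le x y \<and> le y x \<longrightarrow> x = y)
     \<and> (\<forall>x\<in>A. \<forall>y\<in>A. \<forall>z\<in>A. le x y \<and> le y z \<longrightarrow> le x z)"

definition poset_diagram ::
  "'p set \<Rightarrow> ('p \<Rightarrow> 'p \<Rightarrow> bool) \<Rightarrow> ('p \<Rightarrow> 'x set) \<Rightarrow> ('p \<Rightarrow> 'x \<Rightarrow> 'x \<Rightarrow> bool)
   \<Rightarrow> ('p \<Rightarrow> 'p \<Rightarrow> 'x \<Rightarrow> 'x) \<Rightarrow> bool" where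
  "poset_diagram P leP Xs leX f \<longleftrightarrow>
     finite_poset P leP
   \<and> (\<forall>p\<in>P. finite_poset (Xs p) (leX p))
   \<and> (\<forall>p\<in>P. \<forall>q\<in>P. leP p q \<longrightarrow>
        (\<forall>x\<in>Xs p. f p q x \<in> Xs q)
      \<and> (\<forall>x\<in>Xs p. \<forall>y\<in>Xs p. leX p x y \<longrightarrow> leX q (f p q x) (f p q y)))
   \<and> (\<forall>p\<in>P. \<forall>x\<in>Xs p. f p p x = x)
   \<and> (\<forall>p\<in>P. \<forall>q\<in>P. \<forall>r\<in>P. leP p q \<and> leP q r \<longrightarrow>
        (\<forall>x\<in>Xs p. f q r (f p q x) = f p r x))"

definition hocolim_set :: "'p set \<Rightarrow> ('p \<Rightarrow> 'x set) \<Rightarrow> ('p \<times> 'x) set" where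
  "hocolim_set P Xs = Sigma P Xs"

definition hocolim_le ::
  "('p \<Rightarrow> 'p \<Rightarrow> bool) \<Rightarrow> ('p \<Rightarrow> 'x \<Rightarrow> 'x \<Rightarrow> bool) \<Rightarrow> ('p \<Rightarrow> 'p \<Rightarrow> 'x \<Rightarrow> 'x)
   \<Rightarrow> 'p \<times> 'x \<Rightarrow> 'p \<times> 'x \<Rightarrow> bool" where
  "hocolim_le leP leX f a b \<longleftrightarrow> leP (fst a) (fst b) \<and> leX (fst b) (f (fst a) (fst b) (snd a)) (snd b)"

definition hatU :: "('a \<Rightarrow> 'a \<Rightarrow> bool) \<Rightarrow> 'a set \<Rightarrow> 'a \<Rightarrow> 'a set" where
  "hatU le Y x = {y \<in> Y. le y x \<and> y \<noteq> x}"

definition hatF :: "('a \<Rightarrow> 'a \<Rightarrow> bool) \<Rightarrow> 'a set \<Rightarrow> 'a \<Rightarrow> 'a set" where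
  "hatF le Y x = {y \<in> Y. le x y \<and> y \<noteq> x}"

definition up_beat_point :: "('a \<Rightarrow> 'a \<Rightarrow> bool) \<Rightarrow> 'a set \<Rightarrow> 'a \<Rightarrow> bool" where
  "up_beat_point le Y x \<longleftrightarrow> (\<exists>m\<in>hatF le Y x. \<forall>y\<in>hatF le Y x. le m y)"

definition down_beat_point :: "('a \<Rightarrow> 'a \<Rightarrow> bool) \<Rightarrow> 'a set \<Rightarrow> 'a \<Rightarrow> bool" where
  "down_beat_point le Y x \<longleftrightarrow> (\<exists>m\<in>hatU le Y x. \<forall>y\<in>hatU le Y x. le y m)"

text \<open>Contractible: reducible to one point by removing beat points one at a time
  (subposets carry the restricted order, i.e. the same relation on a smaller carrier).\<close>
inductive contractible_poset :: "('a \<Rightarrow> 'a \<Rightarrow> bool) \<Rightarrow> 'a set \<Rightarrow> bool" for le where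
  single: "contractible_poset le {y}"
| remove: "\<lbrakk>x \<in> Y; up_beat_point le Y x \<or> down_beat_point le Y x;
            contractible_poset le (Y - {x})\<rbrakk> \<Longrightarrow> contractible_poset le Y"

definition down_weak_point :: "('a \<Rightarrow> 'a \<Rightarrow> bool) \<Rightarrow> 'a set \<Rightarrow> 'a \<Rightarrow> bool" where
  "down_weak_point le Y x \<longleftrightarrow> contractible_poset le (hatU le Y x)"

definition up_weak_point :: "('a \<Rightarrow> 'a \<Rightarrow> bool) \<Rightarrow> 'a set \<Rightarrow> 'a \<Rightarrow> bool" where
  "up_weak_point le Y x \<longleftrightarrow> contractible_poset le (hatF le Y x)"

inductive collapses :: "('a \<Rightarrow> 'a \<Rightarrow> bool) \<Rightarrow> 'a set \<Rightarrow> 'a set \<Rightarrow> bool" for le where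
  refl: "collapses le Y Y"
| step: "\<lbrakk>x \<in> Y; down_weak_point le Y x \<or> up_weak_point le Y x;
          collapses le (Y - {x}) Z\<rbrakk> \<Longrightarrow> collapses le Y Z"

text \<open>Geometric realization of the order complex of (A, le): the union of the simplices
  spanned by nonempty chains, as a subspace of the function space 'a \<Rightarrow> real
  (barycentric coordinates), with the product (= Euclidean for finite A) topology.\<close>
definition order_complex_realization :: "('a \<Rightarrow> 'a \<Rightarrow> bool) \<Rightarrow> 'a set \<Rightarrow> ('a \<Rightarrow> real) set" where
  "order_complex_realization le A =
     {g. (\<forall>v. 0 \<le> g v) \<and> (\<forall>v. v \<notin> A \<longrightarrow> g v = 0) \<and> sum g A = 1
         \<and> (\<forall>u v. 0 < g u \<and> 0 < g v \<longrightarrow> le u v \<or> le v u)}"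

definition weak_equivalent ::
  "('a \<Rightarrow> 'a \<Rightarrow> bool) \<Rightarrow> 'a set \<Rightarrow> ('b \<Rightarrow> 'b \<Rightarrow> bool) \<Rightarrow> 'b set \<Rightarrow> bool" where
  "weak_equivalent le1 A le2 B \<longleftrightarrow>
     (top_of_set (order_complex_realization le1 A)) homotopy_equivalent_space
     (top_of_set (order_complex_realization le2 B))"

end

theory Submission
  imports Defs
begin

text \<open>
  Every point of \<open>hocolim X\<close> outside the top fibre \<open>X\<^sub>p\<close> has a least element of \<open>X\<^sub>p\<close>
  above it: \<open>(q, x)\<close> lies below \<open>(p, y)\<close> iff \<open>f\<^sub>q\<^sub>p x \<le> y\<close>, so \<open>(p, f\<^sub>q\<^sub>p x)\<close> is that element.
  Removing the points outside \<open>X\<^sub>p\<close> from the top down, each one is an up beat point,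
  hence an up weak point; and on the order complex, pushing the barycentric weight of
  a beat point onto the minimum of its upper link is a deformation retraction.
\<close>

lemma finite_poset_finite: "finite_poset A le \<Longrightarrow> finite A"
  unfolding finite_poset_def by blast

lemma finite_poset_refl: "finite_poset A le \<Longrightarrow> x \<in> A \<Longrightarrow> le x x"
  unfolding finite_poset_def by blast

lemma finite_poset_antisym:
  "finite_poset A le \<Longrightarrow> x \<in> A \<Longrightarrow> y \<in> A \<Longrightarrow> le x y \<Longrightarrow> le y x \<Longrightarrow> x = y"
  unfolding finite_poset_def by blast

lemma finite_poset_trans:
  "finite_poset A le \<Longrightarrow> x \<in> A \<Longrightarrow> y \<in> A \<Longrightarrow> z \<in> A \<Longrightarrow> le x y \<Longrightarrow> le y z \<Longrightarrow> le x z"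
  unfolding finite_poset_def by blast

lemma finite_poset_subset: "finite_poset A le \<Longrightarrow> B \<subseteq> A \<Longrightarrow> finite_poset B le"
  unfolding finite_poset_def by (meson finite_subset subsetD)

lemma finite_poset_converse: "finite_poset A le \<Longrightarrow> finite_poset A (\<lambda>x y. le y x)"
  unfolding finite_poset_def by blast

lemma finite_poset_has_maximal:
  assumes "finite_poset A le" "R \<subseteq> A" "R \<noteq> {}"
  obtains z where "z \<in> R" "\<And>w. w \<in> R \<Longrightarrow> le z w \<Longrightarrow> w = z"
proof -
  have fin: "finite R"
    using assms finite_subset finite_poset_finite by blast
  define below where "below z = card {w\<in>R. le w z}" for z
  obtain z where z: "z \<in> R" "\<And>w. w \<in> R \<Longrightarrow> below w \<le> below z"
  proof -
    have "Max (below ` R) \<in> below ` R"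
      using fin assms(3) by simp
    then obtain z where "z \<in> R" "below z = Max (below ` R)"
      by auto
    then show thesis
      using that fin by simp
  qed
  have "w = z" if w: "w \<in> R" "le z w" for w
  proof (rule ccontr)
    assume "w \<noteq> z"
    then have "\<not> le w z"
      using finite_poset_antisym[OF assms(1)] assms(2) w z(1) by blast
    moreover have "le w w"
      using finite_poset_refl[OF assms(1)] assms(2) w(1) by blast
    moreover have "{v\<in>R. le v z} \<subseteq> {v\<in>R. le v w}"
      using finite_poset_trans[OF assms(1)] assms(2) w z(1) by blast
    ultimately have "{v\<in>R. le v z} \<subset> {v\<in>R. le v w}"
      using w(1) by blast
    then have "below z < below w"
      unfolding below_def using fin by (simp add: psubset_card_mono)
    with z(2)[OF w(1)] show False by simp
  qed
  with z(1) show thesis by (rule that)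
qed

lemma finite_poset_has_minimal:
  assumes "finite_poset A le" "R \<subseteq> A" "R \<noteq> {}"
  obtains z where "z \<in> R" "\<And>w. w \<in> R \<Longrightarrow> le w z \<Longrightarrow> w = z"
  using finite_poset_has_maximal[OF finite_poset_converse[OF assms(1)] assms(2,3)] by blast

lemma contractible_poset_if_least:
  assumes "finite_poset S le" "m \<in> S" "\<forall>y\<in>S. le m y"
  shows "contractible_poset le S"
  using assms
proof (induction "card S" arbitrary: S rule: less_induct)
  case less
  show ?case
  proof (cases "S = {m}")
    case True
    then show ?thesis by (simp add: contractible_poset.single)
  next
    case False
    then obtain z where z: "z \<in> S - {m}" "\<And>w. w \<in> S - {m} \<Longrightarrow> le w z \<Longrightarrow> w = z"
      using finite_poset_has_minimal[OF less.prems(1), of "S - {m}"] less.prems(2) by blast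
    \<comment> \<open>a minimal element above the least one is covered only by it\<close>
    have "hatU le S z = {m}"
      using z less.prems unfolding hatU_def by blast
    then have "down_beat_point le S z"
      using finite_poset_refl[OF less.prems(1,2)] unfolding down_beat_point_def by simp
    moreover have "contractible_poset le (S - {z})"
    proof (rule less.hyps)
      show "card (S - {z}) < card S"
        using finite_poset_finite[OF less.prems(1)] z(1) by (meson DiffD1 card_Diff1_less)
      show "finite_poset (S - {z}) le"
        using less.prems(1) by (rule finite_poset_subset) blast
    qed (use z less.prems in auto)
    ultimately show ?thesis
      using z(1) contractible_poset.remove[of z S le] by blast
  qed
qed

lemma up_beat_point_imp_up_weak_point:
  assumes "finite_poset Y le" "up_beat_point le Y x"
  shows "up_weak_point le Y x"
proof -
  obtain m where "m \<in> hatF le Y x" "\<forall>y\<in>hatF le Y x. le m y"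
    using assms(2) unfolding up_beat_point_def by blast
  moreover have "finite_poset (hatF le Y x) le"
    using assms(1) by (rule finite_poset_subset) (auto simp: hatF_def)
  ultimately show ?thesis
    unfolding up_weak_point_def by (blast intro: contractible_poset_if_least)
qed

lemma order_complex_realization_remove:
  assumes "finite Y" "x \<in> Y"
  shows "order_complex_realization le (Y - {x}) = {g \<in> order_complex_realization le Y. g x = 0}"
proof -
  have "sum g Y = sum g (Y - {x}) + g x" for g :: "'a \<Rightarrow> real"
    using assms by (simp add: sum.remove)
  then show ?thesis
    unfolding order_complex_realization_def by auto
qed

definition transfer_weight :: "'a \<Rightarrow> 'a \<Rightarrow> real \<Rightarrow> ('a \<Rightarrow> real) \<Rightarrow> 'a \<Rightarrow> real" where
  "transfer_weight x m t g = g(x := t * g x, m := g m + (1 - t) * g x)"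

lemma transfer_weight_apply:
  "transfer_weight x m t g v =
     (if v = m then g m + (1 - t) * g x else if v = x then t * g x else g v)"
  by (simp add: transfer_weight_def)

lemma continuous_on_transfer_weight:
  "continuous_on S (\<lambda>z. transfer_weight x m (fst z) (snd z))"
proof (rule continuous_on_coordinatewise_then_product)
  fix i
  have coordinate: "continuous_on S (\<lambda>z. snd z j)" for j
    using continuous_on_compose2[OF continuous_on_product_coordinates
        continuous_on_snd[OF continuous_on_id]]
    by fastforce
  show "continuous_on S (\<lambda>z. transfer_weight x m (fst z) (snd z) i)"
    unfolding transfer_weight_apply
    by (cases "i = m"; cases "i = x") (auto intro!: continuous_intros coordinate)
qed

lemma transfer_weight_in_realization:
  assumes po: "finite_poset Y le" and "x \<in> Y"
    and least: "m \<in> hatF le Y x" "\<forall>y\<in>hatF le Y x. le m y"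
    and t: "t \<in> {0..1}" and g: "g \<in> order_complex_realization le Y"
  shows "transfer_weight x m t g \<in> order_complex_realization le Y"
proof -
  have "m \<in> Y" "x \<noteq> m" "le x m" and up: "\<forall>y\<in>Y. le x y \<and> y \<noteq> x \<longrightarrow> le m y"
    using least unfolding hatF_def by auto
  let ?k = "transfer_weight x m t g"
  have g0: "\<forall>v. 0 \<le> g v" and gout: "\<forall>v. v \<notin> Y \<longrightarrow> g v = 0" and gsum: "sum g Y = 1"
    and chain: "\<forall>u v. 0 < g u \<and> 0 < g v \<longrightarrow> le u v \<or> le v u"
    using g unfolding order_complex_realization_def by auto
  have "sum ?k Y = sum g Y + (1 - t) * g x + (t * g x - g x)"
  proof -
    have "sum ?k Y = (\<Sum>v\<in>Y. g v + (if v = m then (1 - t) * g x else 0)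
                               + (if v = x then t * g x - g x else 0))"
      by (rule sum.cong) (auto simp: transfer_weight_apply \<open>x \<noteq> m\<close>)
    then show ?thesis
      using finite_poset_finite[OF po] \<open>x \<in> Y\<close> \<open>m \<in> Y\<close> by (simp add: sum.distrib)
  qed
  then have "sum ?k Y = 1"
    using gsum by (simp add: algebra_simps)
  moreover have "0 \<le> ?k v" for v
    using g0 t by (simp add: transfer_weight_apply)
  moreover have "?k v = 0" if "v \<notin> Y" for v
    using gout that \<open>x \<in> Y\<close> \<open>m \<in> Y\<close> by (auto simp: transfer_weight_apply)
  moreover have "le u v \<or> le v u" if "0 < ?k u" "0 < ?k v" for u v
  proof -
    \<comment> \<open>the support only gains \<open>m\<close>, and only when \<open>x\<close> is in it\<close>
    have support: "0 < g w \<or> (w = m \<and> 0 < g x)" if "0 < ?k w" for w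
      using that g0[rule_format, of w] g0[rule_format, of x] t
      by (auto simp: transfer_weight_apply zero_less_mult_iff split: if_splits)
    have comparable_m: "le w m \<or> le m w" if "0 < g w" "0 < g x" for w
    proof -
      have "w \<in> Y" using that gout by force
      from chain that have "le w x \<or> le x w" by blast
      then show ?thesis
      proof
        assume "le w x"
        then show ?thesis
          using finite_poset_trans[OF po \<open>w \<in> Y\<close> \<open>x \<in> Y\<close> \<open>m \<in> Y\<close>] \<open>le x m\<close> by blast
      next
        assume "le x w"
        then show ?thesis
          using up \<open>w \<in> Y\<close> \<open>le x m\<close> by (cases "w = x") auto
      qed
    qed
    have "le m m"
      using finite_poset_refl[OF po \<open>m \<in> Y\<close>] .
    with support[OF \<open>0 < ?k u\<close>] support[OF \<open>0 < ?k v\<close>] show ?thesis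
      using chain comparable_m by metis
  qed
  ultimately show ?thesis
    unfolding order_complex_realization_def by blast
qed

lemma homotopy_equivalent_remove_up_beat_point:
  assumes po: "finite_poset Y le" and "x \<in> Y" and "up_beat_point le Y x"
  shows "top_of_set (order_complex_realization le Y) homotopy_equivalent_space
         top_of_set (order_complex_realization le (Y - {x}))"
proof -
  let ?A = "order_complex_realization le Y"
  let ?B = "order_complex_realization le (Y - {x})"
  obtain m where m: "m \<in> hatF le Y x" "\<forall>y\<in>hatF le Y x. le m y"
    using assms(3) unfolding up_beat_point_def by blast
  define h where "h z = transfer_weight x m (fst z) (snd z)" for z
  have B_eq: "?B = {g \<in> ?A. g x = 0}"
    using order_complex_realization_remove[OF finite_poset_finite[OF po] \<open>x \<in> Y\<close>] .
  have h_in: "h z \<in> ?A" if "z \<in> {0..1} \<times> ?A" for z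
    using transfer_weight_in_realization[OF po \<open>x \<in> Y\<close> m] that unfolding h_def by auto
  have h_cont: "continuous_on S h" for S
    unfolding h_def by (rule continuous_on_transfer_weight)
  have "continuous_map (prod_topology (top_of_set {0..1::real}) (top_of_set ?A)) (top_of_set ?A) h"
    using h_cont[of "{0..1} \<times> ?A"] h_in by (simp add: Pi_iff)
  then have "homotopic_with (\<lambda>_. True) (top_of_set ?A) (top_of_set ?A) (id \<circ> (\<lambda>g. h (0, g))) id"
    unfolding homotopic_with_def
    by (intro exI[of _ h] conjI) (auto simp: h_def transfer_weight_def)
  moreover have "retraction_maps (top_of_set ?A) (top_of_set ?B) (\<lambda>g. h (0, g)) id"
    unfolding retraction_maps_def
  proof (intro conjI)
    have "continuous_on ?A (\<lambda>g. h (0, g))"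
      by (rule continuous_on_compose2[OF h_cont continuous_on_Pair[OF continuous_on_const continuous_on_id]]) auto
    moreover have "h (0, g) \<in> ?B" if "g \<in> ?A" for g
      using h_in[of "(0, g)"] that m(1) unfolding B_eq hatF_def by (auto simp: h_def transfer_weight_apply)
    ultimately show "continuous_map (top_of_set ?A) (top_of_set ?B) (\<lambda>g. h (0, g))"
      by (simp add: Pi_iff)
    show "continuous_map (top_of_set ?B) (top_of_set ?A) id"
      unfolding B_eq by (simp add: Pi_iff)
    show "\<forall>g\<in>topspace (top_of_set ?B). h (0, id g) = g"
      unfolding B_eq by (auto simp: h_def transfer_weight_def fun_upd_idem)
  qed
  ultimately show ?thesis
    by (rule deformation_retraction_imp_homotopy_equivalent_space)
qed

text \<open>Equivalently, the inclusion of \<open>A\<close> into \<open>Y\<close> has a left adjoint.\<close>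
definition reflective_subposet :: "('a \<Rightarrow> 'a \<Rightarrow> bool) \<Rightarrow> 'a set \<Rightarrow> 'a set \<Rightarrow> bool" where
  "reflective_subposet le Y A \<longleftrightarrow>
     A \<subseteq> Y \<and> (\<forall>z\<in>Y - A. \<exists>m\<in>A. le z m \<and> (\<forall>y\<in>A. le z y \<longrightarrow> le m y))"

lemma reflective_subposet_collapse:
  assumes "finite_poset Y le" and "reflective_subposet le Y A"
  shows "collapses le Y A
    \<and> top_of_set (order_complex_realization le Y) homotopy_equivalent_space
      top_of_set (order_complex_realization le A)"
  using assms
proof (induction "card Y" arbitrary: Y rule: less_induct)
  case less
  have po: "finite_poset Y le" and "A \<subseteq> Y"
    and reflect: "\<forall>z\<in>Y - A. \<exists>m\<in>A. le z m \<and> (\<forall>y\<in>A. le z y \<longrightarrow> le m y)"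
    using less.prems unfolding reflective_subposet_def by auto
  show ?case
  proof (cases "Y = A")
    case True
    then show ?thesis by (simp add: collapses.refl homotopy_equivalent_space_refl)
  next
    case False
    then obtain z where z: "z \<in> Y - A" "\<And>w. w \<in> Y - A \<Longrightarrow> le z w \<Longrightarrow> w = z"
      using finite_poset_has_maximal[OF po, of "Y - A"] \<open>A \<subseteq> Y\<close> by blast
    obtain m where m: "m \<in> A" "le z m" "\<forall>y\<in>A. le z y \<longrightarrow> le m y"
      using reflect z(1) by blast
    \<comment> \<open>by maximality of \<open>z\<close>, everything strictly above it lies in \<open>A\<close>\<close>
    have "up_beat_point le Y z"
      unfolding up_beat_point_def hatF_def
      using z m \<open>A \<subseteq> Y\<close> by blast
    moreover have "collapses le (Y - {z}) A
      \<and> top_of_set (order_complex_realization le (Y - {z})) homotopy_equivalent_space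
        top_of_set (order_complex_realization le A)"
    proof (rule less.hyps)
      show "card (Y - {z}) < card Y"
        using finite_poset_finite[OF po] z(1) by (meson DiffD1 card_Diff1_less)
      show "finite_poset (Y - {z}) le"
        using po by (rule finite_poset_subset) blast
      show "reflective_subposet le (Y - {z}) A"
        using \<open>A \<subseteq> Y\<close> reflect z(1) unfolding reflective_subposet_def by blast
    qed
    ultimately show ?thesis
      using z(1) collapses.step[of z Y le A] up_beat_point_imp_up_weak_point[OF po]
        homotopy_eqv_trans[OF homotopy_equivalent_remove_up_beat_point[OF po]]
      by blast
  qed
qed

lemma
  assumes "poset_diagram P leP Xs leX f"
  shows poset_diagram_base: "finite_poset P leP"
    and poset_diagram_fibre: "p \<in> P \<Longrightarrow> finite_poset (Xs p) (leX p)"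
    and poset_diagram_map_in:
      "\<lbrakk>p \<in> P; q \<in> P; leP p q; x \<in> Xs p\<rbrakk> \<Longrightarrow> f p q x \<in> Xs q"
    and poset_diagram_map_mono:
      "\<lbrakk>p \<in> P; q \<in> P; leP p q; x \<in> Xs p; y \<in> Xs p; leX p x y\<rbrakk>
       \<Longrightarrow> leX q (f p q x) (f p q y)"
    and poset_diagram_map_id: "\<lbrakk>p \<in> P; x \<in> Xs p\<rbrakk> \<Longrightarrow> f p p x = x"
    and poset_diagram_map_comp:
      "\<lbrakk>p \<in> P; q \<in> P; r \<in> P; leP p q; leP q r; x \<in> Xs p\<rbrakk> \<Longrightarrow> f q r (f p q x) = f p r x"
  using assms unfolding poset_diagram_def by blast+

lemma finite_poset_hocolim:
  assumes X: "poset_diagram P leP Xs leX f"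
  shows "finite_poset (hocolim_set P Xs) (hocolim_le leP leX f)"
  unfolding finite_poset_def
proof (intro conjI ballI impI)
  have "finite P" "\<forall>p\<in>P. finite (Xs p)"
    using finite_poset_finite[OF poset_diagram_base[OF X]]
      finite_poset_finite[OF poset_diagram_fibre[OF X]] by blast+
  then show "finite (hocolim_set P Xs)"
    unfolding hocolim_set_def by simp
next
  fix a assume "a \<in> hocolim_set P Xs"
  then obtain p x where "a = (p, x)" "p \<in> P" "x \<in> Xs p"
    unfolding hocolim_set_def by auto
  then show "hocolim_le leP leX f a a"
    unfolding hocolim_le_def
    using finite_poset_refl[OF poset_diagram_base[OF X]]
      finite_poset_refl[OF poset_diagram_fibre[OF X]] poset_diagram_map_id[OF X] by simp
next
  fix a b
  assume "a \<in> hocolim_set P Xs" "b \<in> hocolim_set P Xs"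
    and "hocolim_le leP leX f a b \<and> hocolim_le leP leX f b a"
  then obtain p x q y where ab: "a = (p, x)" "b = (q, y)" "p \<in> P" "q \<in> P" "x \<in> Xs p" "y \<in> Xs q"
      and "leP p q" "leP q p" "leX q (f p q x) y" "leX p (f q p y) x"
    unfolding hocolim_set_def hocolim_le_def by auto
  moreover from this have "p = q"
    using finite_poset_antisym[OF poset_diagram_base[OF X]] by blast
  ultimately have "a = (p, x)" "b = (p, y)" "p \<in> P" "x \<in> Xs p" "y \<in> Xs p"
      "leX p x y" "leX p y x"
    using poset_diagram_map_id[OF X] by auto
  then show "a = b"
    using finite_poset_antisym[OF poset_diagram_fibre[OF X]] by blast
next
  fix a b c
  assume "a \<in> hocolim_set P Xs" "b \<in> hocolim_set P Xs" "c \<in> hocolim_set P Xs"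
    and "hocolim_le leP leX f a b \<and> hocolim_le leP leX f b c"
  then obtain p x q y r z where abc: "a = (p, x)" "b = (q, y)" "c = (r, z)"
      "p \<in> P" "q \<in> P" "r \<in> P" "x \<in> Xs p" "y \<in> Xs q" "z \<in> Xs r"
      and "leP p q" "leP q r" "leX q (f p q x) y" "leX r (f q r y) z"
    unfolding hocolim_set_def hocolim_le_def by auto
  have "leP p r"
    using finite_poset_trans[OF poset_diagram_base[OF X]] abc \<open>leP p q\<close> \<open>leP q r\<close> by blast
  have "leX r (f p r x) (f q r y)"
  proof -
    have "f p q x \<in> Xs q"
      using poset_diagram_map_in[OF X] abc \<open>leP p q\<close> by blast
    then have "leX r (f q r (f p q x)) (f q r y)"
      using poset_diagram_map_mono[OF X] abc \<open>leP q r\<close> \<open>leX q (f p q x) y\<close> by blast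
    then show ?thesis
      using poset_diagram_map_comp[OF X] abc \<open>leP p q\<close> \<open>leP q r\<close> by simp
  qed
  then have "leX r (f p r x) z"
    using finite_poset_trans[OF poset_diagram_fibre[OF X \<open>r \<in> P\<close>]] poset_diagram_map_in[OF X]
      abc \<open>leP p r\<close> \<open>leP q r\<close> \<open>leX r (f q r y) z\<close> by blast
  then show "hocolim_le leP leX f a c"
    unfolding hocolim_le_def using abc \<open>leP p r\<close> by simp
qed

lemma reflective_subposet_hocolim_top_fibre:
  assumes X: "poset_diagram P leP Xs leX f" and "p \<in> P" and top: "\<forall>q\<in>P. leP q p"
  shows "reflective_subposet (hocolim_le leP leX f) (hocolim_set P Xs) ({p} \<times> Xs p)"
  unfolding reflective_subposet_def
proof (intro conjI ballI)
  show "{p} \<times> Xs p \<subseteq> hocolim_set P Xs"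
    using \<open>p \<in> P\<close> unfolding hocolim_set_def by auto
  fix a assume "a \<in> hocolim_set P Xs - {p} \<times> Xs p"
  then obtain q x where a: "a = (q, x)" "q \<in> P" "x \<in> Xs q"
    unfolding hocolim_set_def by auto
  have "leP q p" "leP p p"
    using top a(2) \<open>p \<in> P\<close> by blast+
  then have fx: "f q p x \<in> Xs p"
    using poset_diagram_map_in[OF X a(2) \<open>p \<in> P\<close>] a(3) by blast
  show "\<exists>m\<in>{p} \<times> Xs p. hocolim_le leP leX f a m
      \<and> (\<forall>y\<in>{p} \<times> Xs p. hocolim_le leP leX f a y \<longrightarrow> hocolim_le leP leX f m y)"
  proof (intro bexI[of _ "(p, f q p x)"] conjI ballI impI)
    show "hocolim_le leP leX f a (p, f q p x)"
      unfolding hocolim_le_def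
      using a \<open>leP q p\<close> finite_poset_refl[OF poset_diagram_fibre[OF X \<open>p \<in> P\<close>] fx] by simp
    fix y assume "y \<in> {p} \<times> Xs p" "hocolim_le leP leX f a y"
    then show "hocolim_le leP leX f (p, f q p x) y"
      unfolding hocolim_le_def
      using a \<open>leP p p\<close> poset_diagram_map_id[OF X \<open>p \<in> P\<close> fx] by auto
  qed (use fx in simp)
qed

theorem corollary2p5:
  fixes P :: "'p set" and leP :: "'p \<Rightarrow> 'p \<Rightarrow> bool"
    and Xs :: "'p \<Rightarrow> 'x set" and leX :: "'p \<Rightarrow> 'x \<Rightarrow> 'x \<Rightarrow> bool"
    and f :: "'p \<Rightarrow> 'p \<Rightarrow> 'x \<Rightarrow> 'x" and p :: 'p
  assumes "poset_diagram P leP Xs leX f"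
    and "p \<in> P" and "\<forall>q\<in>P. leP q p"
  shows "collapses (hocolim_le leP leX f) (hocolim_set P Xs) ({p} \<times> Xs p)
       \<and> weak_equivalent (hocolim_le leP leX f) (hocolim_set P Xs)
                         (hocolim_le leP leX f) ({p} \<times> Xs p)"
  using reflective_subposet_collapse[OF finite_poset_hocolim[OF assms(1)]
      reflective_subposet_hocolim_top_fibre[OF assms]]
  unfolding weak_equivalent_def .

end
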